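(* Let $\mathfrak l$ be a real finite-dimensional nilpotent Lie algebra with $\dim\mathfrak l'=2$ and $\mathfrak l'\subset\mathfrak z(\mathfrak l)$, let $\bar{\mathfrak l}\subset\mathfrak l$ be a 3-dimensional subspace with $[\bar{\mathfrak l},\bar{\mathfrak l}]=\mathfrak l'$, let $\mathfrak a$ be a semisimple orthogonal $\mathfrak l$-module and let $[\alpha,\gamma]\in\mathcal H^2_Q(\mathfrak l,\mathfrak a)$ be admissible, represented with $\alpha(\mathfrak l,\mathfrak l)\subset\mathfrak a^{\mathfrak l}$. Then $\alpha([L,\mathfrak l],\mathfrak l)=0$ for all $L\in\mathfrak l$ satisfying $[L,\bar{\mathfrak l}]=0$.
   Context: For a Lie algebra $\mathfrak l$: $\mathfrak l^1=\mathfrak l$, $\mathfrak l^{k+1}=[\mathfrak l,\mathfrak l^k]$, $\mathfrak l'=\mathfrak l^2$, $\mathfrak z(\mathfrak l)$ the centre. An orthogonal $\mathfrak l$-module $(\rho,\mathfrak a)$ is a finite-dimensional real vector space with a nondegenerate symmetric bilinear form $\langle\cdot,\cdot\rangle_{\mathfrak a}$ and a representation by skew-adjoint maps; $\mathfrak a^{\mathfrak l}$ its invariants. $C^p(\mathfrak l,\mathfrak a)$: alternating $p$-linear maps with Chevalley–Eilenberg differential $d$; $C^p(\mathfrak l)=C^p(\mathfrak l,\mathbb R)$; $\langle\alpha\wedge\beta\rangle$ is the wedge product followed by contraction with $\langle\cdot,\cdot\rangle_{\mathfrak a}$. $\mathcal Z^2_Q(\mathfrak l,\mathfrak a)=\{(\alpha,\gamma)\in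 C^2(\mathfrak l,\mathfrak a)\oplus C^3(\mathfrak l): d\alpha=0,d\gamma=\frac12\langle\alpha\wedge\alpha\rangle\}$; the group $C^1(\mathfrak l,\mathfrak a)\oplus C^2(\mathfrak l)$ with $(\tau_1,\sigma_1)*(\tau_2,\sigma_2)=(\tau_1+\tau_2,\sigma_1+\sigma_2+\frac12\langle\tau_1\wedge\tau_2\rangle)$ acts by $(\alpha,\gamma)(\tau,\sigma)=(\alpha+d\tau,\gamma+d\sigma+\langle(\alpha+\frac12d\tau)\wedge\tau\rangle)$; $\mathcal H^2_Q(\mathfrak l,\mathfrak a)$ is the orbit set. Admissibility: with $\mathfrak l^{m+2}=0$, $\mathfrak l_{(0)}=\mathfrak z(\mathfrak l)\cap\ker\rho$, $\mathfrak l_{(k)}=\mathfrak z(\mathfrak l)\cap\mathfrak l^{k+1}$ ($k\ge1$), and a representative with $\alpha(\mathfrak l,\mathfrak l)\subset\mathfrak a^{\mathfrak l}$, the class is admissible iff for all $0\le k\le m$: $(A_k)$ whenever $L_0\in\mathfrak l_{(k)}$ and there are $A_0\in\mathfrak a$, $Z_0\in(\mathfrak l^{k+1})^*$ with $\alpha(L,L_0)=0$ and $\gamma(L,L_0,\cdot)=-\langle A_0,\alpha(L,\cdot)\rangle_{\mathfrak a}+\langle Z_0,[L,\cdot]\rangle$ on $\mathfrak l^{k+1}$ for all $L$, then $L_0=0$; $(B_k)$ $\alpha$ applied to the kernel of the bracket map $\mathfrak l\otimes\mathfrak l^{k+1}\to\mathfrak l$ is a nondegenerate subspace of $\mathfrak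 a$. *)

theory Defs
  imports "HOL-Analysis.Analysis"
begin

(* Finite-dimensional real vector spaces are modelled by types of class euclidean_space
   (the inner product of the class plays no role). *)

definition trilinear :: "('a::real_vector \<Rightarrow> 'a \<Rightarrow> 'a \<Rightarrow> 'b::real_vector) \<Rightarrow> bool" where
  "trilinear f \<longleftrightarrow> (\<forall>y z. linear (\<lambda>x. f x y z)) \<and> (\<forall>x z. linear (\<lambda>y. f x y z))
                    \<and> (\<forall>x y. linear (\<lambda>z. f x y z))"

definition lie_algebra :: "('l::real_vector \<Rightarrow> 'l \<Rightarrow> 'l) \<Rightarrow> bool" where
  "lie_algebra br \<longleftrightarrow> bilinear br \<and> (\<forall>x. br x x = 0) \<and>
     (\<forall>x y z. br x (br y z) + br y (br z x) + br z (br x y) = 0)"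

definition brset :: "('l::real_vector \<Rightarrow> 'l \<Rightarrow> 'l) \<Rightarrow> 'l set \<Rightarrow> 'l set \<Rightarrow> 'l set" where
  "brset br A B = span {br x y | x y. x \<in> A \<and> y \<in> B}"

(* lower central series, shifted: lcs br k = l^(k+1); so lcs 0 = l, lcs 1 = l' *)
fun lcs :: "('l::real_vector \<Rightarrow> 'l \<Rightarrow> 'l) \<Rightarrow> nat \<Rightarrow> 'l set" where
  "lcs br 0 = UNIV"
| "lcs br (Suc k) = brset br UNIV (lcs br k)"

definition nilpotent_lie :: "('l::real_vector \<Rightarrow> 'l \<Rightarrow> 'l) \<Rightarrow> bool" where
  "nilpotent_lie br \<longleftrightarrow> (\<exists>m. lcs br m = {0})"

definition centre :: "('l::real_vector \<Rightarrow> 'l \<Rightarrow> 'l) \<Rightarrow> 'l set" where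
  "centre br = {z. \<forall>x. br z x = 0}"

definition orthogonal_module ::
  "('l::real_vector \<Rightarrow> 'l \<Rightarrow> 'l) \<Rightarrow> ('l \<Rightarrow> 'a::real_vector \<Rightarrow> 'a) \<Rightarrow> ('a \<Rightarrow> 'a \<Rightarrow> real) \<Rightarrow> bool" where
  "orthogonal_module br rho B \<longleftrightarrow>
     bilinear B \<and> (\<forall>u v. B u v = B v u) \<and> (\<forall>u. (\<forall>v. B u v = 0) \<longrightarrow> u = 0) \<and>
     bilinear rho \<and>
     (\<forall>x y v. rho (br x y) v = rho x (rho y v) - rho y (rho x v)) \<and>
     (\<forall>x u v. B (rho x u) v = - B u (rho x v))"

definition invariant_subspace :: "('l \<Rightarrow> 'a::real_vector \<Rightarrow> 'a) \<Rightarrow> 'a set \<Rightarrow> bool" where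
  "invariant_subspace rho U \<longleftrightarrow> subspace U \<and> (\<forall>x. \<forall>u\<in>U. rho x u \<in> U)"

definition semisimple_module :: "('l \<Rightarrow> 'a::real_vector \<Rightarrow> 'a) \<Rightarrow> bool" where
  "semisimple_module rho \<longleftrightarrow> (\<forall>U. invariant_subspace rho U \<longrightarrow>
     (\<exists>V. invariant_subspace rho V \<and> U \<inter> V = {0} \<and> U + V = UNIV))"

definition invariants :: "('l \<Rightarrow> 'a::real_vector \<Rightarrow> 'a) \<Rightarrow> 'a set" where
  "invariants rho = {v. \<forall>x. rho x v = 0}"

definition cochain2 :: "('l::real_vector \<Rightarrow> 'l \<Rightarrow> 'a::real_vector) \<Rightarrow> bool" where
  "cochain2 \<alpha> \<longleftrightarrow> bilinear \<alpha> \<and> (\<forall>x. \<alpha> x x = 0)"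

definition cochain3 :: "('l::real_vector \<Rightarrow> 'l \<Rightarrow> 'l \<Rightarrow> real) \<Rightarrow> bool" where
  "cochain3 \<gamma> \<longleftrightarrow> trilinear \<gamma> \<and> (\<forall>x z. \<gamma> x x z = 0) \<and> (\<forall>x y. \<gamma> x y y = 0)"

definition d2 :: "('l::real_vector \<Rightarrow> 'l \<Rightarrow> 'l) \<Rightarrow> ('l \<Rightarrow> 'a::real_vector \<Rightarrow> 'a)
                   \<Rightarrow> ('l \<Rightarrow> 'l \<Rightarrow> 'a) \<Rightarrow> 'l \<Rightarrow> 'l \<Rightarrow> 'l \<Rightarrow> 'a" where
  "d2 br rho \<alpha> x0 x1 x2 =
     rho x0 (\<alpha> x1 x2) - rho x1 (\<alpha> x0 x2) + rho x2 (\<alpha> x0 x1)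
     - \<alpha> (br x0 x1) x2 + \<alpha> (br x0 x2) x1 - \<alpha> (br x1 x2) x0"

definition d3 :: "('l::real_vector \<Rightarrow> 'l \<Rightarrow> 'l) \<Rightarrow> ('l \<Rightarrow> 'l \<Rightarrow> 'l \<Rightarrow> real)
                   \<Rightarrow> 'l \<Rightarrow> 'l \<Rightarrow> 'l \<Rightarrow> 'l \<Rightarrow> real" where
  "d3 br \<gamma> x0 x1 x2 x3 =
       \<gamma> (br x0 x1) x2 x3 - \<gamma> (br x0 x2) x1 x3 + \<gamma> (br x0 x3) x1 x2
     + \<gamma> (br x1 x2) x0 x3 - \<gamma> (br x1 x3) x0 x2 + \<gamma> (br x2 x3) x0 x1"

(* <alpha /\ beta> for 2-forms: sum over (2,2)-shuffles *)
definition wedge22 :: "('a \<Rightarrow> 'a \<Rightarrow> real) \<Rightarrow> ('l \<Rightarrow> 'l \<Rightarrow> 'a) \<Rightarrow> ('l \<Rightarrow> 'l \<Rightarrow> 'a)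
                        \<Rightarrow> 'l \<Rightarrow> 'l \<Rightarrow> 'l \<Rightarrow> 'l \<Rightarrow> real" where
  "wedge22 B \<alpha> \<beta> x1 x2 x3 x4 =
       B (\<alpha> x1 x2) (\<beta> x3 x4) - B (\<alpha> x1 x3) (\<beta> x2 x4) + B (\<alpha> x1 x4) (\<beta> x2 x3)
     + B (\<alpha> x2 x3) (\<beta> x1 x4) - B (\<alpha> x2 x4) (\<beta> x1 x3) + B (\<alpha> x3 x4) (\<beta> x1 x2)"

definition quad_cocycle ::
  "('l::real_vector \<Rightarrow> 'l \<Rightarrow> 'l) \<Rightarrow> ('l \<Rightarrow> 'a::real_vector \<Rightarrow> 'a) \<Rightarrow> ('a \<Rightarrow> 'a \<Rightarrow> real)
   \<Rightarrow> ('l \<Rightarrow> 'l \<Rightarrow> 'a) \<Rightarrow> ('l \<Rightarrow> 'l \<Rightarrow> 'l \<Rightarrow> real) \<Rightarrow> bool" where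
  "quad_cocycle br rho B \<alpha> \<gamma> \<longleftrightarrow> cochain2 \<alpha> \<and> cochain3 \<gamma> \<and>
     (\<forall>x0 x1 x2. d2 br rho \<alpha> x0 x1 x2 = 0) \<and>
     (\<forall>x0 x1 x2 x3. d3 br \<gamma> x0 x1 x2 x3 = (1/2) * wedge22 B \<alpha> \<alpha> x0 x1 x2 x3)"

definition lsub :: "('l::real_vector \<Rightarrow> 'l \<Rightarrow> 'l) \<Rightarrow> ('l \<Rightarrow> 'a::real_vector \<Rightarrow> 'a) \<Rightarrow> nat \<Rightarrow> 'l set" where
  "lsub br rho k = (if k = 0 then centre br \<inter> {x. rho x = (\<lambda>v. 0)} else centre br \<inter> lcs br k)"

(* condition (A_k); Z0 \<in> (l^(k+1))^* is represented by a linear functional on l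
   (only its restriction to l^(k+1) = lcs br k matters) *)
definition condA ::
  "('l::real_vector \<Rightarrow> 'l \<Rightarrow> 'l) \<Rightarrow> ('l \<Rightarrow> 'a::real_vector \<Rightarrow> 'a) \<Rightarrow> ('a \<Rightarrow> 'a \<Rightarrow> real)
   \<Rightarrow> ('l \<Rightarrow> 'l \<Rightarrow> 'a) \<Rightarrow> ('l \<Rightarrow> 'l \<Rightarrow> 'l \<Rightarrow> real) \<Rightarrow> nat \<Rightarrow> bool" where
  "condA br rho B \<alpha> \<gamma> k \<longleftrightarrow> (\<forall>L0 \<in> lsub br rho k.
     (\<exists>A0 :: 'a. \<exists>Z0 :: 'l \<Rightarrow> real. linear Z0 \<and>
        (\<forall>L. \<alpha> L L0 = 0 \<and>
             (\<forall>X \<in> lcs br k. \<gamma> L L0 X = - B A0 (\<alpha> L X) + Z0 (br L X))))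
     \<longrightarrow> L0 = 0)"

(* image under alpha of the kernel of the bracket map l \<otimes> l^(k+1) \<rightarrow> l;
   elements of l \<otimes> l^(k+1) are written as finite sums of pure tensors *)
definition alpha_ker ::
  "('l::real_vector \<Rightarrow> 'l \<Rightarrow> 'l) \<Rightarrow> ('l \<Rightarrow> 'l \<Rightarrow> 'a::real_vector) \<Rightarrow> nat \<Rightarrow> 'a set" where
  "alpha_ker br \<alpha> k = {(\<Sum>i<n. \<alpha> (x i) (y i)) | (n::nat) x y.
       (\<forall>i<n. y i \<in> lcs br k) \<and> (\<Sum>i<n. br (x i) (y i)) = 0}"

definition nondegenerate_subspace :: "('a::real_vector \<Rightarrow> 'a \<Rightarrow> real) \<Rightarrow> 'a set \<Rightarrow> bool" where
  "nondegenerate_subspace B W \<longleftrightarrow> (\<forall>w\<in>W. (\<forall>v\<in>W. B w v = 0) \<longrightarrow> w = 0)"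

definition condB ::
  "('l::real_vector \<Rightarrow> 'l \<Rightarrow> 'l) \<Rightarrow> ('a::real_vector \<Rightarrow> 'a \<Rightarrow> real) \<Rightarrow> ('l \<Rightarrow> 'l \<Rightarrow> 'a) \<Rightarrow> nat \<Rightarrow> bool" where
  "condB br B \<alpha> k \<longleftrightarrow> nondegenerate_subspace B (alpha_ker br \<alpha> k)"

(* admissibility, evaluated on a representative (alpha, gamma) with alpha(l,l) \<subseteq> a^l,
   for all 0 \<le> k \<le> m where l^(m+2) = 0 *)
definition admissible ::
  "('l::real_vector \<Rightarrow> 'l \<Rightarrow> 'l) \<Rightarrow> ('l \<Rightarrow> 'a::real_vector \<Rightarrow> 'a) \<Rightarrow> ('a \<Rightarrow> 'a \<Rightarrow> real)
   \<Rightarrow> ('l \<Rightarrow> 'l \<Rightarrow> 'a) \<Rightarrow> ('l \<Rightarrow> 'l \<Rightarrow> 'l \<Rightarrow> real) \<Rightarrow> bool" where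
  "admissible br rho B \<alpha> \<gamma> \<longleftrightarrow> (\<forall>m. lcs br (Suc m) = {0} \<longrightarrow>
     (\<forall>k\<le>m. condA br rho B \<alpha> \<gamma> k \<and> condB br B \<alpha> k))"

end

(* Put beta(X,Y) = alpha([L,X],Y). Since l' is central, the bracket map l (x) l' -> l vanishes,
   so condition (B_1) says that the span of alpha(l,l') is nondegenerate, and beta takes values
   there. Because alpha has invariant values, d alpha = 0 is the cocycle identity for trivial
   coefficients; it gives alpha(l',l') = 0 and, as l' = [lbar,lbar] with L centralizing lbar,
   alpha(l',L) = 0. Hence beta is symmetric and vanishes on lbar. Evaluating
   d gamma = 1/2 <alpha /\ alpha> with two arguments in l' expresses gamma([x,y],v,u) through
   alpha; for x = L it vanishes, which yields the exchange rule
   B(beta(X,Y), alpha(W,U)) = B(beta(X,W), alpha(Y,U)) for U in l'. Expanding alpha(W,[P,Q]) for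
   P, Q in lbar by the cocycle identity, every term becomes B(beta(X,P), _) = 0 with P in lbar,
   so beta is orthogonal to alpha(l,l') and nondegeneracy forces beta = 0.
   Only (B_1) is used. *)

theory Submission
  imports Defs
begin

lemma alternating_bilinear_antisym:
  assumes "bilinear h" "\<And>x. h x x = 0"
  shows "h x y = - h y x"
proof -
  have "h (x + y) (x + y) = h x x + h x y + h y x + h y y"
    using assms(1) by (simp add: bilinear_ladd bilinear_radd)
  then show ?thesis
    using assms(2) by (simp add: eq_neg_iff_add_eq_0)
qed

lemma lcs_1_eq_span_brackets: "lcs br 1 = span {br x y | x y. True}"
  by (simp add: brset_def)

(* keeps l' = lcs br 1 folded instead of unfolding it to a nested span *)
declare lcs.simps(2) [simp del]

lemma orthogonal_alpha_ker:
  assumes "bilinear B" "\<And>W U. U \<in> lcs br k \<Longrightarrow> B v (\<alpha> W U) = 0"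
    and "w \<in> alpha_ker br \<alpha> k"
  shows "B v w = 0"
proof -
  obtain n :: nat and x y
    where w: "w = (\<Sum>i<n. \<alpha> (x i) (y i))" and y: "\<forall>i<n. y i \<in> lcs br k"
    using assms(3) unfolding alpha_ker_def by blast
  have "linear (B v)"
    using assms(1) by (simp add: bilinear_def)
  then show ?thesis
    unfolding w linear_sum[OF \<open>linear (B v)\<close>] using assms(2) y by simp
qed

lemma admissible_condB_1:
  assumes "admissible br rho B \<alpha> \<gamma>" "lcs br 2 = {0}"
  shows "condB br B \<alpha> 1"
proof -
  have "lcs br (Suc 1) = {0}"
    using assms(2) by (simp only: Suc_1)
  then show ?thesis
    using assms(1) unfolding admissible_def by blast
qed

locale two_step_quad_cocycle =
  fixes br :: "'l::real_vector \<Rightarrow> 'l \<Rightarrow> 'l"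
    and rho :: "'l \<Rightarrow> 'a::real_vector \<Rightarrow> 'a"
    and B :: "'a \<Rightarrow> 'a \<Rightarrow> real"
    and \<alpha> :: "'l \<Rightarrow> 'l \<Rightarrow> 'a"
    and \<gamma> :: "'l \<Rightarrow> 'l \<Rightarrow> 'l \<Rightarrow> real"
  assumes lie: "lie_algebra br"
    and derived_central: "lcs br 1 \<subseteq> centre br"
    and B_bilinear: "bilinear B"
    and B_sym: "B u v = B v u"
    and cocycle: "quad_cocycle br rho B \<alpha> \<gamma>"
    and values_invariant: "\<alpha> x y \<in> invariants rho"
begin

lemma br_antisym: "br x y = - br y x"
  using lie alternating_bilinear_antisym unfolding lie_algebra_def by blast

lemma alpha_bilinear: "bilinear \<alpha>"
  using cocycle unfolding quad_cocycle_def cochain2_def by blast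

lemma alpha_antisym: "\<alpha> x y = - \<alpha> y x"
  using cocycle alternating_bilinear_antisym unfolding quad_cocycle_def cochain2_def by blast

lemma alpha_zero_left [simp]: "\<alpha> 0 y = 0"
  using alpha_bilinear by (rule bilinear_lzero)

lemma alpha_linear_left: "linear (\<lambda>x. \<alpha> x y)"
  using alpha_bilinear by (simp add: bilinear_def)

lemma gamma_zero_left [simp]: "\<gamma> 0 y z = 0"
proof -
  have "linear (\<lambda>x. \<gamma> x y z)"
    using cocycle unfolding quad_cocycle_def cochain3_def trilinear_def by blast
  then show ?thesis
    by (rule linear_0)
qed

lemma gamma_antisym: "\<gamma> x y z = - \<gamma> y x z"
proof (rule alternating_bilinear_antisym[where h = "\<lambda>x y. \<gamma> x y z"])
  show "bilinear (\<lambda>x y. \<gamma> x y z)" "\<And>x. \<gamma> x x z = 0"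
    using cocycle unfolding quad_cocycle_def cochain3_def trilinear_def bilinear_def by auto
qed

lemma alpha_closed: "\<alpha> (br x0 x1) x2 - \<alpha> (br x0 x2) x1 + \<alpha> (br x1 x2) x0 = 0"
proof -
  have "d2 br rho \<alpha> x0 x1 x2 = 0"
    using cocycle unfolding quad_cocycle_def by blast
  moreover have "rho x (\<alpha> y z) = 0" for x y z
    using values_invariant unfolding invariants_def by blast
  ultimately show ?thesis
    unfolding d2_def by (simp add: algebra_simps)
qed

lemma alpha_bracket_right: "\<alpha> w (br p q) = \<alpha> q (br p w) - \<alpha> p (br q w)"
  using alpha_closed[of p q w] alpha_antisym[of w "br p q"] alpha_antisym[of "br p w" q]
    alpha_antisym[of "br q w" p]
  by (simp add: algebra_simps)

lemma d3_gamma_eq: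
  "d3 br \<gamma> x0 x1 x2 x3 =
     B (\<alpha> x0 x1) (\<alpha> x2 x3) - B (\<alpha> x0 x2) (\<alpha> x1 x3) + B (\<alpha> x0 x3) (\<alpha> x1 x2)"
proof -
  have "d3 br \<gamma> x0 x1 x2 x3 = (1/2) * wedge22 B \<alpha> \<alpha> x0 x1 x2 x3"
    using cocycle unfolding quad_cocycle_def by blast
  then show ?thesis
    unfolding wedge22_def using B_sym[of "\<alpha> x1 x2" "\<alpha> x0 x3"]
      B_sym[of "\<alpha> x1 x3" "\<alpha> x0 x2"] B_sym[of "\<alpha> x2 x3" "\<alpha> x0 x1"]
    by simp
qed

lemma bracket_in_derived: "br x y \<in> lcs br 1"
  unfolding lcs_1_eq_span_brackets by (rule span_base) blast

lemma derived_bracket_left [simp]: "z \<in> lcs br 1 \<Longrightarrow> br z x = 0"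
  using derived_central unfolding centre_def by blast

lemma derived_bracket_right [simp]: "z \<in> lcs br 1 \<Longrightarrow> br x z = 0"
  by (subst br_antisym) simp

lemma lcs_2_eq_0: "lcs br 2 = {0}"
proof -
  have brackets: "{br x y | x y. x \<in> UNIV \<and> y \<in> lcs br 1} = {0}"
  proof
    show "{br x y | x y. x \<in> UNIV \<and> y \<in> lcs br 1} \<subseteq> {0}"
      by auto
    have "br 0 (br 0 0) = 0" "br 0 0 \<in> lcs br 1"
      by (rule derived_bracket_right[OF bracket_in_derived], rule bracket_in_derived)
    then show "{0} \<subseteq> {br x y | x y. x \<in> UNIV \<and> y \<in> lcs br 1}"
      by (metis (mono_tags, lifting) UNIV_I empty_subsetI insert_subset mem_Collect_eq)
  qed
  have "lcs br 2 = brset br UNIV (lcs br 1)"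
    using lcs.simps(2)[of br 1] by (simp only: Suc_1)
  then show ?thesis
    unfolding brset_def brackets by simp
qed

lemma alpha_derived_derived:
  assumes "v \<in> lcs br 1" "z \<in> lcs br 1"
  shows "\<alpha> v z = 0"
proof (rule linear_eq_0_on_span[OF alpha_linear_left])
  show "v \<in> span {br x y | x y. True}"
    using assms(1) by (simp only: lcs_1_eq_span_brackets)
  show "\<alpha> u z = 0" if "u \<in> {br x y | x y. True}" for u
    using that alpha_closed[of z] assms(2) by auto
qed

lemma d3_gamma_derived:
  assumes "v \<in> lcs br 1" "u \<in> lcs br 1"
  shows "d3 br \<gamma> x y v u = \<gamma> (br x y) v u"
  using assms unfolding d3_def by simp

lemma gamma_bracket_derived:
  assumes "v \<in> lcs br 1" "u \<in> lcs br 1"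
  shows "\<gamma> (br x y) v u = B (\<alpha> x u) (\<alpha> y v) - B (\<alpha> x v) (\<alpha> y u)"
  using d3_gamma_eq[of x y v u] d3_gamma_derived[OF assms] alpha_derived_derived[OF assms]
    bilinear_rzero[OF B_bilinear] by simp

lemma alpha_in_alpha_ker_1:
  assumes "v \<in> lcs br 1"
  shows "\<alpha> v w \<in> alpha_ker br \<alpha> 1"
  unfolding alpha_ker_def
proof (intro CollectI exI conjI)
  show "\<alpha> v w = (\<Sum>i<Suc 0. \<alpha> (- w) v)"
    using alpha_antisym[of v w] bilinear_lneg[OF alpha_bilinear] by simp
qed (use assms in simp_all)

end

locale two_step_quad_cocycle_centralizer = two_step_quad_cocycle +
  fixes lbar and L
  assumes lbar_generates: "brset br lbar lbar = lcs br 1"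
    and centralizes: "\<forall>x\<in>lbar. br L x = 0"
begin

lemma lcs_1_eq_span_lbar_brackets: "lcs br 1 = span {br p q | p q. p \<in> lbar \<and> q \<in> lbar}"
  using lbar_generates by (simp add: brset_def)

lemma alpha_derived_L:
  assumes "v \<in> lcs br 1"
  shows "\<alpha> v L = 0"
proof (rule linear_eq_0_on_span[OF alpha_linear_left])
  show "v \<in> span {br p q | p q. p \<in> lbar \<and> q \<in> lbar}"
    using assms by (simp only: lcs_1_eq_span_lbar_brackets)
  show "\<alpha> u L = 0" if u: "u \<in> {br p q | p q. p \<in> lbar \<and> q \<in> lbar}" for u
  proof -
    obtain p q where "u = br p q" "br p L = 0" "br q L = 0"
      using u centralizes br_antisym[of _ L] by force
    then show ?thesis
      using alpha_closed[of p q L] by simp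
  qed
qed

lemma alpha_L_derived: "v \<in> lcs br 1 \<Longrightarrow> \<alpha> L v = 0"
  by (subst alpha_antisym) (simp add: alpha_derived_L)

lemma alpha_bracket_L_sym: "\<alpha> (br L x) y = \<alpha> (br L y) x"
  using alpha_closed[of L x y] alpha_derived_L[OF bracket_in_derived] by simp

lemma alpha_bracket_L_lbar: "p \<in> lbar \<Longrightarrow> \<alpha> (br L x) p = 0"
  using alpha_bracket_L_sym[of x p] centralizes by simp

lemma gamma_bracket_L_derived:
  "v \<in> lcs br 1 \<Longrightarrow> u \<in> lcs br 1 \<Longrightarrow> \<gamma> (br L x) v u = 0"
  using gamma_bracket_derived alpha_L_derived bilinear_lzero[OF B_bilinear] by simp

lemma B_alpha_bracket_L_exchange:
  assumes "u \<in> lcs br 1"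
  shows "B (\<alpha> (br L x) y) (\<alpha> w u) = B (\<alpha> (br L x) w) (\<alpha> y u)"
proof -
  have "\<gamma> (br y w) (br L x) u = 0"
    using gamma_antisym[of "br y w" "br L x" u]
      gamma_bracket_L_derived[OF bracket_in_derived assms]
    by simp
  then show ?thesis
    using gamma_bracket_derived[OF bracket_in_derived assms, of y w L x]
      alpha_antisym[of w "br L x"] alpha_antisym[of y "br L x"]
      B_sym[of "\<alpha> y u" "\<alpha> (br L x) w"]
    by (simp add: bilinear_lneg[OF B_bilinear] bilinear_rneg[OF B_bilinear])
qed

lemma B_alpha_bracket_L_orthogonal:
  assumes "u \<in> lcs br 1"
  shows "B (\<alpha> (br L x) y) (\<alpha> w u) = 0"
proof (rule linear_eq_0_on_span[where f = "\<lambda>u. B (\<alpha> (br L x) y) (\<alpha> w u)"])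
  show "linear (\<lambda>u. B (\<alpha> (br L x) y) (\<alpha> w u))"
    using linear_compose[of "\<alpha> w" "B (\<alpha> (br L x) y)"] alpha_bilinear B_bilinear
    by (simp add: bilinear_def o_def)
  show "u \<in> span {br p q | p q. p \<in> lbar \<and> q \<in> lbar}"
    using assms by (simp only: lcs_1_eq_span_lbar_brackets)
  have lbar_term: "B (\<alpha> (br L x) y) (\<alpha> p v) = 0" if "p \<in> lbar" "v \<in> lcs br 1" for p v
    using B_alpha_bracket_L_exchange[OF that(2)] alpha_bracket_L_lbar[OF that(1)]
      bilinear_lzero[OF B_bilinear] by simp
  show "B (\<alpha> (br L x) y) (\<alpha> w u') = 0"
    if u': "u' \<in> {br p q | p q. p \<in> lbar \<and> q \<in> lbar}" for u'
  proof -
    obtain p q where "u' = br p q" "p \<in> lbar" "q \<in> lbar"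
      using u' by blast
    then show ?thesis
      using alpha_bracket_right[of w p q] lbar_term bracket_in_derived
        bilinear_rsub[OF B_bilinear]
      by simp
  qed
qed

lemma alpha_bracket_L_eq_0:
  assumes "condB br B \<alpha> 1"
  shows "\<alpha> (br L x) y = 0"
proof -
  have "\<alpha> (br L x) y \<in> alpha_ker br \<alpha> 1"
    using alpha_in_alpha_ker_1 bracket_in_derived .
  moreover have "B (\<alpha> (br L x) y) w = 0" if "w \<in> alpha_ker br \<alpha> 1" for w
    using orthogonal_alpha_ker[OF B_bilinear B_alpha_bracket_L_orthogonal that] .
  ultimately show ?thesis
    using assms unfolding condB_def nondegenerate_subspace_def by blast
qed

end

theorem lemma5:
  fixes br :: "'l::euclidean_space \<Rightarrow> 'l \<Rightarrow> 'l"
    and rho :: "'l \<Rightarrow> 'a::euclidean_space \<Rightarrow> 'a"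
    and B :: "'a \<Rightarrow> 'a \<Rightarrow> real"
    and \<alpha> :: "'l \<Rightarrow> 'l \<Rightarrow> 'a"
    and \<gamma> :: "'l \<Rightarrow> 'l \<Rightarrow> 'l \<Rightarrow> real"
    and lbar :: "'l set"
  assumes lie: "lie_algebra br"
    and nil: "nilpotent_lie br"
    and dimder: "dim (lcs br 1) = 2"
    and dercent: "lcs br 1 \<subseteq> centre br"
    and lbar_sub: "subspace lbar"
    and lbar_dim: "dim lbar = 3"
    and lbar_br: "brset br lbar lbar = lcs br 1"
    and orth: "orthogonal_module br rho B"
    and ss: "semisimple_module rho"
    and cocyc: "quad_cocycle br rho B \<alpha> \<gamma>"
    and inv: "\<forall>x y. \<alpha> x y \<in> invariants rho"
    and adm: "admissible br rho B \<alpha> \<gamma>"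
  shows "\<forall>L. (\<forall>X\<in>lbar. br L X = 0) \<longrightarrow> (\<forall>X Y. \<alpha> (br L X) Y = 0)"
proof (intro allI impI)
  fix L X Y
  assume "\<forall>X\<in>lbar. br L X = 0"
  interpret two_step_quad_cocycle_centralizer br rho B \<alpha> \<gamma> lbar L
    using lie dercent orth cocyc inv lbar_br \<open>\<forall>X\<in>lbar. br L X = 0\<close>
    by unfold_locales (auto simp: orthogonal_module_def)
  show "\<alpha> (br L X) Y = 0"
    using alpha_bracket_L_eq_0 admissible_condB_1[OF adm lcs_2_eq_0] by blast
qed

end
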